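(* Let $m>n$ be positive integers and let $G[V_1,V_2]$ be a balanced bipartite graph on $2(m+n-1)$ vertices (so $|V_1|=|V_2|=m+n-1$) with minimum degree $\delta(G)>\frac{3}{4}(m+n-1)$. Then for every red-blue coloring of the edges of $G$, either there is a connected component $C$ of the red subgraph with $|V(C)\cap V_1|\ge m$ and $|V(C)\cap V_2|\ge m$, or there is a connected component $C$ of the blue subgraph with $|V(C)\cap V_1|\ge n$ and $|V(C)\cap V_2|\ge n$.
   Context: For a red-blue edge coloring of $G$, the red subgraph (resp. blue subgraph) is the spanning subgraph of $G$ consisting of all red (resp. blue) edges; a red (blue) component is a connected component of this spanning subgraph. *)

theory Defs
  imports Main
begin

definition bipartite_graph :: "'a set \<Rightarrow> 'a set \<Rightarrow> ('a \<Rightarrow> 'a \<Rightarrow> bool) \<Rightarrow> bool" where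
  "bipartite_graph V1 V2 E \<longleftrightarrow> finite V1 \<and> finite V2 \<and> V1 \<inter> V2 = {} \<and>
     (\<forall>u v. E u v \<longrightarrow> E v u) \<and>
     (\<forall>u v. E u v \<longrightarrow> (u \<in> V1 \<and> v \<in> V2) \<or> (u \<in> V2 \<and> v \<in> V1))"

definition degree :: "('a \<Rightarrow> 'a \<Rightarrow> bool) \<Rightarrow> 'a \<Rightarrow> nat" where
  "degree E v = card {u. E v u}"

definition component :: "'a set \<Rightarrow> ('a \<Rightarrow> 'a \<Rightarrow> bool) \<Rightarrow> 'a \<Rightarrow> 'a set" where
  "component V F v = {u \<in> V. (F\<^sup>*\<^sup>*) v u}"

definition components :: "'a set \<Rightarrow> ('a \<Rightarrow> 'a \<Rightarrow> bool) \<Rightarrow> 'a set set" where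
  "components V F = component V F ` V"

end

theory Submission
  imports Defs
begin

(* Write N = m + n - 1. The degree bound 3N/4 forces any two vertices of one side to have a common
   neighbour in every set of at least N/2 vertices of the other side, and every vertex to have a
   neighbour in every set of at least N/4 vertices of the other side. Hence if S and T lie on
   opposite sides, all edges between them have the same colour and |T| >= N/2, then S lies in one
   monochromatic component, which contains T as well once |S| >= N/4.

   Applying this to the vertices outside the red and the blue component of a fixed vertex yields a
   monochromatic component with at least N/2 vertices on each side. If it is blue we are done, as
   2n <= N. If it is red but has fewer than m vertices on one side, the at least n remaining
   vertices of that side send only blue edges to its part on the other side, which has at least
   N/2 >= n vertices, and the same argument gives a blue component with n vertices on each side. *)

definition reach :: "('a \<Rightarrow> 'a \<Rightarrow> bool) \<Rightarrow> 'a \<Rightarrow> 'a set" where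
  "reach F v = {u. F\<^sup>*\<^sup>* v u}"

lemma reach_refl [simp]: "v \<in> reach F v"
  by (simp add: reach_def)

lemma reach_step: "u \<in> reach F v \<Longrightarrow> F u w \<Longrightarrow> w \<in> reach F v"
  unfolding reach_def by (auto intro: rtranclp.rtrancl_into_rtrancl)

definition has_component :: "'a set \<Rightarrow> 'a set \<Rightarrow> ('a \<Rightarrow> 'a \<Rightarrow> bool) \<Rightarrow> (nat \<Rightarrow> bool) \<Rightarrow> bool" where
  "has_component X Y F P \<longleftrightarrow>
     (\<exists>C \<in> components (X \<union> Y) F. P (card (C \<inter> X)) \<and> P (card (C \<inter> Y)))"

lemma has_component_iff_reach:
  "has_component X Y F P \<longleftrightarrow>
     (\<exists>v \<in> X \<union> Y. P (card (reach F v \<inter> X)) \<and> P (card (reach F v \<inter> Y)))"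
proof -
  have "component (X \<union> Y) F v \<inter> Z = reach F v \<inter> Z" if "Z \<subseteq> X \<union> Y" for v Z
    using that by (auto simp: component_def reach_def)
  then show ?thesis
    by (auto simp: has_component_def components_def)
qed

lemma has_component_commute: "has_component Y X F P = has_component X Y F P"
  by (auto simp: has_component_iff_reach)

lemma has_component_mono:
  "has_component X Y F P \<Longrightarrow> (\<And>c. P c \<Longrightarrow> Q c) \<Longrightarrow> has_component X Y F Q"
  by (auto simp: has_component_iff_reach)

lemma has_componentI:
  assumes "finite X" "finite Y" "v \<in> X \<union> Y"
    and "A \<subseteq> reach F v \<inter> X" "B \<subseteq> reach F v \<inter> Y"
    and "\<And>i j. i \<le> j \<Longrightarrow> P i \<Longrightarrow> P j" "P (card A)" "P (card B)"
  shows "has_component X Y F P"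
proof -
  have "card A \<le> card (reach F v \<inter> X)" "card B \<le> card (reach F v \<inter> Y)"
    using assms(1-5) by (simp_all add: card_mono)
  then show ?thesis
    using assms(3,6-8) unfolding has_component_iff_reach by blast
qed

locale dense_bipartite =
  fixes X Y :: "'a set" and E :: "'a \<Rightarrow> 'a \<Rightarrow> bool" and N :: nat
  assumes bipartite: "bipartite_graph X Y E"
    and card_X: "card X = N" and card_Y: "card Y = N" and N_pos: "0 < N"
    and min_degree: "v \<in> X \<union> Y \<Longrightarrow> 3 * N < 4 * degree E v"
begin

lemma finite_X: "finite X" and finite_Y: "finite Y" and E_sym: "E u v \<Longrightarrow> E v u"
  using bipartite by (auto simp: bipartite_graph_def)

sublocale swapped: dense_bipartite Y X E N
  using bipartite card_X card_Y N_pos min_degree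
  by unfold_locales (auto simp: bipartite_graph_def)

lemma neighbours_subset: "v \<in> X \<Longrightarrow> {u. E v u} \<subseteq> Y"
  using bipartite unfolding bipartite_graph_def by blast

lemma ex_in_if_card_large: "N \<le> k * card A \<Longrightarrow> \<exists>a. a \<in> A"
  using N_pos by (cases "A = {}") auto

lemma ex_neighbour: "v \<in> X \<union> Y \<Longrightarrow> \<exists>u. E v u"
  using min_degree[of v] unfolding degree_def by (cases "{u. E v u} = {}") auto

lemma card_X_Diff: "card (X - A) = N - card (A \<inter> X)"
  using card_Diff_subset_Int[OF finite_subset[OF _ finite_X]] card_X by (simp add: Int_commute)

lemma card_neighbours_in:
  assumes "v \<in> X" "T \<subseteq> Y"
  shows "4 * card T < 4 * card {t \<in> T. E v t} + N"
proof -
  let ?M = "{u. E v u}"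
  have fin: "finite T" "finite ?M"
    using assms neighbours_subset finite_Y finite_subset by blast+
  have "T \<union> ?M \<subseteq> Y"
    using assms neighbours_subset by blast
  then have "card (T \<union> ?M) \<le> N"
    using card_mono[OF finite_Y] card_Y by fastforce
  moreover have "card T + card ?M = card (T \<union> ?M) + card {t \<in> T. E v t}"
    using card_Un_Int[OF fin] by (simp add: Int_def)
  moreover have "3 * N < 4 * card ?M"
    using min_degree[of v] assms(1) unfolding degree_def by simp
  ultimately show ?thesis
    by linarith
qed

lemma common_neighbour:
  assumes "s \<in> X" "s' \<in> X" "T \<subseteq> Y" "N \<le> 2 * card T"
  shows "\<exists>t \<in> T. E s t \<and> E s' t"
proof (rule ccontr)
  assume "\<not> ?thesis"
  then have "card {t \<in> T. E s t} + card {t \<in> T. E s' t} = card ({t \<in> T. E s t} \<union> {t \<in> T. E s' t})"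
    using finite_subset[OF assms(3) finite_Y] by (intro card_Un_disjoint[symmetric]) auto
  also have "\<dots> \<le> card T"
    using finite_subset[OF assms(3) finite_Y] by (intro card_mono) auto
  finally show False
    using card_neighbours_in[OF assms(1,3)] card_neighbours_in[OF assms(2,3)] assms(4) by linarith
qed

lemma neighbour_in:
  assumes "v \<in> X" "S \<subseteq> Y" "N \<le> 4 * card S"
  shows "\<exists>s \<in> S. E v s"
proof -
  have "0 < card {s \<in> S. E v s}"
    using card_neighbours_in[OF assms(1,2)] assms(3) by linarith
  then show ?thesis
    by (auto simp: card_gt_0_iff)
qed

end

context dense_bipartite
begin

lemma rectangle_side_connected:
  assumes F_sym: "symp F"
    and S: "S \<subseteq> X" and T: "T \<subseteq> Y" and coloured: "\<And>s t. s \<in> S \<Longrightarrow> t \<in> T \<Longrightarrow> E s t \<Longrightarrow> F s t"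
    and T_large: "N \<le> 2 * card T" and s0: "s0 \<in> S" and s: "s \<in> S"
  shows "s \<in> reach F s0"
proof -
  obtain t where t: "t \<in> T" "E s0 t" "E s t"
    using common_neighbour[OF _ _ T T_large] S s0 s by blast
  have "F s0 t" "F t s"
    using coloured[OF s0 t(1,2)] sympD[OF F_sym coloured[OF s t(1,3)]] .
  then show ?thesis
    by (rule reach_step[OF reach_step[OF reach_refl]])
qed

lemma rectangle_connected:
  assumes F_sym: "symp F"
    and S: "S \<subseteq> X" and T: "T \<subseteq> Y" and coloured: "\<And>s t. s \<in> S \<Longrightarrow> t \<in> T \<Longrightarrow> E s t \<Longrightarrow> F s t"
    and T_large: "N \<le> 2 * card T" and S_large: "N \<le> 4 * card S" and s0: "s0 \<in> S"
  shows "S \<union> T \<subseteq> reach F s0"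
proof -
  have S_reached: "S \<subseteq> reach F s0"
    using rectangle_side_connected[where F=F, OF F_sym S T coloured T_large s0] by blast
  moreover have "t \<in> reach F s0" if t: "t \<in> T" for t
  proof -
    obtain s where s: "s \<in> S" "E t s"
      using swapped.neighbour_in[OF _ S S_large] t T by blast
    have "s \<in> reach F s0"
      using S_reached s(1) by blast
    then show ?thesis
      using coloured[OF s(1) t E_sym[OF s(2)]] by (rule reach_step)
  qed
  ultimately show ?thesis
    by blast
qed

lemma rectangle_has_component:
  assumes F_sym: "symp F"
    and S: "S \<subseteq> X" and T: "T \<subseteq> Y" and coloured: "\<And>s t. s \<in> S \<Longrightarrow> t \<in> T \<Longrightarrow> E s t \<Longrightarrow> F s t"
    and T_large: "N \<le> 2 * card T" and k: "0 < k" "k \<le> card S" "k \<le> card T"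
  shows "has_component X Y F (\<lambda>c. k \<le> c)"
proof -
  obtain s0 where s0: "s0 \<in> S"
    using k by (metis card.empty ex_in_conv not_less)
  then have "s0 \<in> X \<union> Y"
    using S by blast
  have S_reached: "S \<subseteq> reach F s0"
    using rectangle_side_connected[where F=F, OF F_sym S T coloured T_large s0] by blast
  show ?thesis
  proof (cases "N \<le> 4 * card S")
    case True
    then have "T \<subseteq> reach F s0"
      using rectangle_connected[where F=F, OF F_sym S T coloured T_large _ s0] by blast
    then show ?thesis
      using S T S_reached k
      by (intro has_componentI[OF finite_X finite_Y \<open>s0 \<in> X \<union> Y\<close>, where A=S and B=T]) auto
  next
    case False
    \<comment> \<open>S is so small that the neighbourhood of s0 in T alone has k vertices.\<close>
    let ?B = "{t \<in> T. E s0 t}"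
    have "k \<le> card ?B"
      using card_neighbours_in[OF _ T, of s0] S s0 False T_large k(2) by auto
    moreover have "?B \<subseteq> reach F s0"
      using coloured[OF s0] reach_step[OF reach_refl, of F s0] by blast
    ultimately show ?thesis
      using S T S_reached k
      by (intro has_componentI[OF finite_X finite_Y \<open>s0 \<in> X \<union> Y\<close>, where A=S and B="?B"]) auto
  qed
qed

end

locale coloured_dense_bipartite = dense_bipartite +
  fixes F G :: "'a \<Rightarrow> 'a \<Rightarrow> bool"
  assumes F_sym: "symp F" and G_sym: "symp G"
    and edge_coloured: "E u v \<Longrightarrow> F u v \<or> G u v"
begin

sublocale colours_swapped: coloured_dense_bipartite X Y E N G F
  using F_sym G_sym edge_coloured by unfold_locales blast+

end

context coloured_dense_bipartite
begin

lemma edge_leaving_reach: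
  assumes "E u w" "u \<in> reach F x" "w \<notin> reach F x"
  shows "G u w"
  using edge_coloured[OF assms(1)] reach_step[OF assms(2)] assms(3) by blast

lemma half_component_if_large_in_Y:
  assumes x: "x \<in> X" and large: "N \<le> 2 * card (reach F x \<inter> Y)"
  shows "has_component X Y F (\<lambda>c. N \<le> 2 * c) \<or> has_component X Y G (\<lambda>c. N \<le> 2 * c)"
proof (cases "N \<le> 2 * card (reach F x \<inter> X)")
  case True
  then have "has_component X Y F (\<lambda>c. N \<le> 2 * c)"
    unfolding has_component_iff_reach using x large by blast
  then show ?thesis ..
next
  case False
  let ?P = "X - reach F x" and ?T = "reach F x \<inter> Y"
  have P_large: "N \<le> 4 * card ?P"
    using False card_X_Diff[of "reach F x"] by linarith
  then obtain p where p: "p \<in> ?P"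
    using ex_in_if_card_large by blast
  have "G s t" if "s \<in> ?P" "t \<in> ?T" "E s t" for s t
    using edge_leaving_reach[of t s x] that E_sym sympD[OF G_sym] by blast
  then have "?P \<union> ?T \<subseteq> reach G p"
    using rectangle_connected[where F=G, OF G_sym _ _ _ large P_large p] by blast
  then have "has_component X Y G (\<lambda>c. N \<le> 2 * c)"
    using p large False card_X_Diff[of "reach F x"]
    by (intro has_componentI[OF finite_X finite_Y, where v=p and A="?P" and B="?T"]) auto
  then show ?thesis ..
qed

lemma reach_on_X_subset_other_reach:
  assumes x: "x \<in> X" and small: "2 * card (reach F x \<inter> Y) < N"
    and x': "x' \<in> X" "x' \<in> reach F x"
  shows "x' \<in> reach G x"
proof -
  let ?Q = "Y - reach F x"
  have "N \<le> 2 * card ?Q"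
    using small swapped.card_X_Diff[of "reach F x"] by linarith
  then obtain t where t: "t \<in> ?Q" "E x t" "E x' t"
    using common_neighbour[OF x x'(1)] by blast
  then have "G x t" "G t x'"
    using edge_leaving_reach[OF t(2) reach_refl] edge_leaving_reach[OF t(3) x'(2)]
    by (auto intro: sympD[OF G_sym])
  then show ?thesis
    by (rule reach_step[OF reach_step[OF reach_refl]])
qed

end

context coloured_dense_bipartite
begin

lemma reaches_agree_on_X:
  assumes x: "x \<in> X"
    and small_F: "2 * card (reach F x \<inter> Y) < N" and small_G: "2 * card (reach G x \<inter> Y) < N"
  shows "reach F x \<inter> X = reach G x \<inter> X"
  using reach_on_X_subset_other_reach[OF x small_F] colours_swapped.reach_on_X_subset_other_reach[OF x small_G]
  by blast

lemma neighbours_outside_reaches: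
  assumes agree: "reach F x \<inter> X = reach G x \<inter> X"
    and y: "y \<in> Y" "y \<notin> reach F x" "y \<notin> reach G x"
  shows "{u. E y u} \<subseteq> X - reach F x"
proof
  fix u
  assume "u \<in> {u. E y u}"
  then have u: "E u y" "u \<in> X"
    using E_sym swapped.neighbours_subset[OF y(1)] by auto
  have "u \<notin> reach F x"
  proof
    assume "u \<in> reach F x"
    then have "G u y" "u \<in> reach G x"
      using edge_leaving_reach[OF u(1) _ y(2)] agree u(2) by blast+
    then show False
      using reach_step[of u G x y] y(3) by blast
  qed
  then show "u \<in> X - reach F x"
    using u(2) by blast
qed

lemma two_components_cover_Y:
  assumes agree: "reach F x \<inter> X = reach G x \<inter> X"
    and C_large: "N \<le> 4 * card (reach F x \<inter> Y)" and D_large: "N \<le> 4 * card (reach G x \<inter> Y)"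
    and P_large: "N \<le> 2 * card (X - reach F x)"
  obtains c d where "c \<in> Y" "d \<in> Y"
    and "X - reach F x \<subseteq> reach G c \<inter> reach F d" and "Y \<subseteq> reach G c \<union> reach F d"
proof -
  let ?C = "reach F x \<inter> Y" and ?D = "reach G x \<inter> Y" and ?P = "X - reach F x"
  obtain c d where c: "c \<in> ?C" and d: "d \<in> ?D"
    using ex_in_if_card_large[OF C_large] ex_in_if_card_large[OF D_large] by blast
  have "G s t" if "s \<in> ?C" "t \<in> ?P" "E s t" for s t
    using edge_leaving_reach[of s t x] that by blast
  then have K: "?C \<union> ?P \<subseteq> reach G c"
    using swapped.rectangle_connected[where F=G, OF G_sym _ _ _ P_large C_large c] by blast
  have "F s t" if "s \<in> ?D" "t \<in> ?P" "E s t" for s t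
    using colours_swapped.edge_leaving_reach[of s t x] that agree by blast
  then have L: "?D \<union> ?P \<subseteq> reach F d"
    using swapped.rectangle_connected[where F=F, OF F_sym _ _ _ P_large D_large d] by blast
  have "y \<in> reach G c \<union> reach F d" if y: "y \<in> Y" for y
  proof (cases "y \<in> reach F x \<or> y \<in> reach G x")
    case True
    then show ?thesis
      using K L y by blast
  next
    case False
    obtain p where "E y p"
      using ex_neighbour y by blast
    moreover have "{u. E y u} \<subseteq> ?P"
      using neighbours_outside_reaches[OF agree y] False by blast
    ultimately have "p \<in> reach G c" "p \<in> reach F d" "F p y \<or> G p y"
      using K L edge_coloured E_sym by blast+
    then show ?thesis
      using reach_step[of p G c y] reach_step[of p F d y] by blast
  qed
  then show ?thesis
    using that c d K L by blast
qed

lemma half_component_if_small_in_Y: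
  assumes x: "x \<in> X"
    and small_F: "2 * card (reach F x \<inter> Y) < N" and small_G: "2 * card (reach G x \<inter> Y) < N"
  shows "has_component X Y F (\<lambda>c. N \<le> 2 * c) \<or> has_component X Y G (\<lambda>c. N \<le> 2 * c)"
proof -
  let ?C = "reach F x \<inter> Y" and ?D = "reach G x \<inter> Y" and ?P = "X - reach F x"
  have agree: "reach F x \<inter> X = reach G x \<inter> X"
    using reaches_agree_on_X[OF x small_F small_G] .
  have card_CD: "card (?C \<union> ?D) \<le> card ?C + card ?D"
    by (rule card_Un_le)
  have "{u. E x u} \<subseteq> ?C \<union> ?D"
    using neighbours_subset[OF x] edge_coloured reach_step[OF reach_refl, of F x]
      reach_step[OF reach_refl, of G x] by blast
  then have "card {u. E x u} \<le> card (?C \<union> ?D)"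
    by (intro card_mono) (simp_all add: finite_Y)
  then have C_large: "N \<le> 4 * card ?C" and D_large: "N \<le> 4 * card ?D"
    using min_degree[of x] x small_F small_G card_CD unfolding degree_def by auto
  obtain y0 where y0: "y0 \<in> Y" "y0 \<notin> reach F x" "y0 \<notin> reach G x"
  proof -
    have "\<not> Y \<subseteq> ?C \<union> ?D"
      using card_mono[of "?C \<union> ?D" Y] finite_Y card_Y card_CD small_F small_G by auto
    then show ?thesis
      using that by blast
  qed
  have "card {u. E y0 u} \<le> card ?P"
    using neighbours_outside_reaches[OF agree y0] finite_X by (intro card_mono) auto
  then have P_large: "N \<le> 2 * card ?P"
    using min_degree[of y0] y0(1) unfolding degree_def by auto
  obtain c d where cd: "c \<in> Y" "d \<in> Y"
    and P_reached: "?P \<subseteq> reach G c \<inter> reach F d" and "Y \<subseteq> reach G c \<union> reach F d"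
    using two_components_cover_Y[OF agree C_large D_large P_large] by blast
  then have "Y \<subseteq> (reach G c \<inter> Y) \<union> (reach F d \<inter> Y)"
    by blast
  then have "N \<le> card (reach G c \<inter> Y) + card (reach F d \<inter> Y)"
    using card_mono card_Un_le card_Y finite_Y by (metis finite_Int finite_Un le_trans)
  then consider "N \<le> 2 * card (reach G c \<inter> Y)" | "N \<le> 2 * card (reach F d \<inter> Y)"
    by linarith
  then show ?thesis
  proof cases
    case 1
    then have "has_component X Y G (\<lambda>c. N \<le> 2 * c)"
      using cd P_reached P_large by (intro has_componentI[OF finite_X finite_Y, where v=c and A="?P"]) auto
    then show ?thesis ..
  next
    case 2
    then have "has_component X Y F (\<lambda>c. N \<le> 2 * c)"
      using cd P_reached P_large by (intro has_componentI[OF finite_X finite_Y, where v=d and A="?P"]) auto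
    then show ?thesis ..
  qed
qed

end

context coloured_dense_bipartite
begin

lemma half_component:
  "has_component X Y F (\<lambda>c. N \<le> 2 * c) \<or> has_component X Y G (\<lambda>c. N \<le> 2 * c)"
proof -
  obtain x where x: "x \<in> X"
    using ex_in_if_card_large[of 1 X] card_X by auto
  consider "N \<le> 2 * card (reach F x \<inter> Y)" | "N \<le> 2 * card (reach G x \<inter> Y)"
    | "2 * card (reach F x \<inter> Y) < N" "2 * card (reach G x \<inter> Y) < N"
    by linarith
  then show ?thesis
  proof cases
    case 1
    then show ?thesis
      using half_component_if_large_in_Y[OF x] by blast
  next
    case 2
    then show ?thesis
      using colours_swapped.half_component_if_large_in_Y[OF x] by blast
  next
    case 3
    then show ?thesis
      using half_component_if_small_in_Y[OF x] by blast
  qed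
qed

lemma other_colour_component_if_small_in_X:
  assumes n: "0 < n" "n < m" "N = m + n - 1"
    and large: "N \<le> 2 * card (reach F v \<inter> Y)" and small: "card (reach F v \<inter> X) < m"
  shows "has_component X Y G (\<lambda>c. n \<le> c)"
proof -
  let ?P = "X - reach F v" and ?T = "reach F v \<inter> Y"
  have "n \<le> card ?P"
    using card_X_Diff[of "reach F v"] small n by linarith
  moreover have "n \<le> card ?T"
    using large n by linarith
  moreover have "G s t" if "s \<in> ?P" "t \<in> ?T" "E s t" for s t
    using edge_leaving_reach[of t s v] that E_sym sympD[OF G_sym] by blast
  ultimately show ?thesis
    using rectangle_has_component[where F=G and S="?P" and T="?T", OF G_sym _ _ _ large n(1)] by blast
qed

lemma large_monochromatic_component:
  assumes n: "0 < n" "n < m" "N = m + n - 1"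
  shows "has_component X Y F (\<lambda>c. m \<le> c) \<or> has_component X Y G (\<lambda>c. n \<le> c)"
  using half_component
proof
  assume "has_component X Y G (\<lambda>c. N \<le> 2 * c)"
  then have "has_component X Y G (\<lambda>c. n \<le> c)"
    by (rule has_component_mono) (use n in linarith)
  then show ?thesis ..
next
  assume "has_component X Y F (\<lambda>c. N \<le> 2 * c)"
  then obtain v where v: "v \<in> X \<union> Y"
    and large: "N \<le> 2 * card (reach F v \<inter> X)" "N \<le> 2 * card (reach F v \<inter> Y)"
    unfolding has_component_iff_reach by blast
  consider "m \<le> card (reach F v \<inter> X)" "m \<le> card (reach F v \<inter> Y)"
    | "card (reach F v \<inter> X) < m" | "card (reach F v \<inter> Y) < m"
    by linarith
  then show ?thesis
  proof cases
    case 1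
    then show ?thesis
      unfolding has_component_iff_reach using v by blast
  next
    case 2
    then show ?thesis
      using other_colour_component_if_small_in_X[OF n large(2)] by blast
  next
    case 3
    interpret sides_swapped: coloured_dense_bipartite Y X E N F G
      using F_sym G_sym edge_coloured by unfold_locales
    from 3 show ?thesis
      using sides_swapped.other_colour_component_if_small_in_X[OF n large(1)]
      by (simp add: has_component_commute)
  qed
qed

end

theorem lemma2p1:
  fixes m n :: nat and V1 V2 :: "'a set" and E :: "'a \<Rightarrow> 'a \<Rightarrow> bool"
    and red :: "'a \<Rightarrow> 'a \<Rightarrow> bool"
  assumes "0 < n" and "n < m"
    and "bipartite_graph V1 V2 E"
    and "card V1 = m + n - 1" and "card V2 = m + n - 1"
    and "\<forall>v \<in> V1 \<union> V2. 4 * degree E v > 3 * (m + n - 1)"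
    and "\<forall>u v. red u v \<longrightarrow> red v u"
  shows "(\<exists>C \<in> components (V1 \<union> V2) (\<lambda>u v. E u v \<and> red u v).
            card (C \<inter> V1) \<ge> m \<and> card (C \<inter> V2) \<ge> m)
       \<or> (\<exists>C \<in> components (V1 \<union> V2) (\<lambda>u v. E u v \<and> \<not> red u v).
            card (C \<inter> V1) \<ge> n \<and> card (C \<inter> V2) \<ge> n)"
proof -
  interpret coloured_dense_bipartite V1 V2 E "m + n - 1"
    "\<lambda>u v. E u v \<and> red u v" "\<lambda>u v. E u v \<and> \<not> red u v"
  proof unfold_locales
    show "symp (\<lambda>u v. E u v \<and> red u v)" "symp (\<lambda>u v. E u v \<and> \<not> red u v)"
      using assms(3,7) unfolding bipartite_graph_def symp_def by blast+
  qed (use assms in auto)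
  show ?thesis
    using large_monochromatic_component[OF assms(1,2) refl] unfolding has_component_def .
qed

end
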